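(* Let $s,t\in\mathbb{R}^2$ with $D_{st}>0$, let $P_s>0$, $N_0>0$, $\gamma\in(0,\infty)$, $P_r=\gamma P_s$, and $\alpha\ge 2$. For a relay position $r$ in the interior of the segment $[s,t]$ and a power allocation $(P_{sr},P_{srt},P_{rt})\in[0,\infty)^3$ with $P_{sr}+P_{srt}\le P_s$ and $P_{rt}\le P_r$, define $$R_{sr}=\frac{P_{sr}}{D_{sr}^{\alpha}N_0},\quad R_{rt}=\frac{P_{rt}}{D_{rt}^{\alpha}N_0},\quad R_{srt}=\frac{P_{srt}}{D_{st}^{\alpha}N_0},\qquad R_{st}=R_{srt}+\min(R_{sr},R_{rt}).$$ Then the maximum of $R_{st}$ over all such relay positions and feasible power allocations is attained exactly at the relay position with $$D_{sr}^{*}=\frac{D_{st}}{1+\sqrt[\alpha]{\gamma}},\qquad D_{rt}^{*}=\frac{\sqrt[\alpha]{\gamma}\,D_{st}}{1+\sqrt[\alpha]{\gamma}},$$ the maximal value is $$R_{st}^{*}=\frac{P_s}{(D_{sr}^{*})^{\alpha}N_0}=\frac{\gamma P_s}{(D_{rt}^{*})^{\alpha}N_0},$$ and every power allocation achieving $R^*_{st}$ at this position has $P_{srt}=0$, i.e. all the flow is sent over the path $s\to r\to t$.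
   Context: $D_{uv}$ denotes the Euclidean distance between points $u,v\in\mathbb{R}^2$. The model is the low-SNR (wideband) relay channel with source $s$, relay $r$, destination $t$: the source splits its power between a hyperarc to $\{r,t\}$ (rate limited by the farther node $t$, namely $R_{srt}$) and a hyperarc to $r$ (rate $R_{sr}$), and the relay transmits to $t$ with power $P_{rt}$. *)

theory Defs
  imports "HOL-Analysis.Analysis"
begin

definition rate_st ::
  "real \<Rightarrow> real \<Rightarrow> real^2 \<Rightarrow> real^2 \<Rightarrow> real^2 \<Rightarrow> real \<Rightarrow> real \<Rightarrow> real \<Rightarrow> real" where
  "rate_st \<alpha> N0 s r t Psr Psrt Prt =
     Psrt / (dist s t powr \<alpha> * N0)
     + min (Psr / (dist s r powr \<alpha> * N0)) (Prt / (dist r t powr \<alpha> * N0))"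

definition feasible_alloc :: "real \<Rightarrow> real \<Rightarrow> real \<Rightarrow> real \<Rightarrow> real \<Rightarrow> bool" where
  "feasible_alloc Ps Pr Psr Psrt Prt \<longleftrightarrow>
     0 \<le> Psr \<and> 0 \<le> Psrt \<and> 0 \<le> Prt \<and> Psr + Psrt \<le> Ps \<and> Prt \<le> Pr"

end

theory Submission
  imports Defs
begin

(* Write a = D_sr, b = D_rt (so a + b = D_st on the segment), g = gamma^(1/alpha) and
   x = (a + b)/(1 + g), the claimed optimal source-relay distance.  After multiplying by
   the noise level N0 the rate is  p/(a+b)^alpha + min (q/a^alpha) (w/b^alpha)  with
   source budget p + q <= P and relay budget w <= gamma P.

   Let m be the min term.  Then m a^alpha <= q and m b^alpha <= w, so weighting the
   second inequality by g/gamma and adding, m (a^alpha + (g/gamma) b^alpha) <= (1+g) P - p.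
   By convexity of y |-> y^alpha (two-point Jensen with weights 1 : g) the left factor is
   at least (1+g) x^alpha.  Hence the rate is at most P/x^alpha minus a gap term which
   is positive unless p = 0, because (a+b)^alpha = (1+g)^alpha x^alpha > (1+g) x^alpha.
   In the equality case m = P/x^alpha, and the two budget inequalities force a <= x and
   b <= g x, hence a = x. *)

section \<open>The noise-normalised relay rate\<close>

text \<open>Rate (times N0) with source-relay distance a, relay-destination distance b and
  the relay on the straight line, so that the source-destination distance is a + b.\<close>

definition relay_rate :: "real \<Rightarrow> real \<Rightarrow> real \<Rightarrow> real \<Rightarrow> real \<Rightarrow> real \<Rightarrow> real" where
  "relay_rate \<alpha> a b p q w = p / (a + b) powr \<alpha> + min (q / a powr \<alpha>) (w / b powr \<alpha>)"

lemma powr_two_point_jensen: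
  fixes a c g \<alpha> :: real
  assumes "0 < a" "0 < c" "0 < g" "1 \<le> \<alpha>"
  shows "((a + g * c) / (1 + g)) powr \<alpha> * (1 + g) \<le> a powr \<alpha> + g * c powr \<alpha>"
proof -
  have weights: "1 - g / (1 + g) = 1 / (1 + g)"
    using assms(3) by (simp add: field_simps)
  have mean: "(1 - g / (1 + g)) *\<^sub>R a + (g / (1 + g)) *\<^sub>R c = (a + g * c) / (1 + g)"
    using assms(3) unfolding weights by (simp add: add_divide_distrib)
  have "(\<lambda>y. y powr \<alpha>) ((1 - g / (1 + g)) *\<^sub>R a + (g / (1 + g)) *\<^sub>R c)
        \<le> (1 - g / (1 + g)) * a powr \<alpha> + (g / (1 + g)) * c powr \<alpha>"
    by (rule convex_onD[OF powr_convex[OF assms(4)]]) (use assms in auto)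
  then have "((a + g * c) / (1 + g)) powr \<alpha> \<le> (a powr \<alpha> + g * c powr \<alpha>) / (1 + g)"
    unfolding mean weights by (simp add: add_divide_distrib)
  then show ?thesis
    using assms(3) by (simp add: field_simps)
qed

lemma hop_costs_lower_bound:
  fixes a b g \<alpha> :: real
  assumes "0 < a" "0 < b" "0 < g" "1 \<le> \<alpha>"
  shows "((a + b) / (1 + g)) powr \<alpha> * (1 + g) \<le> a powr \<alpha> + g / g powr \<alpha> * b powr \<alpha>"
proof -
  have "g * (b / g) powr \<alpha> = g / g powr \<alpha> * b powr \<alpha>"
    using assms by (simp add: powr_divide)
  moreover have "a + g * (b / g) = a + b"
    using assms(3) by simp
  ultimately show ?thesis
    using powr_two_point_jensen[of a "b / g" g \<alpha>] assms by simp
qed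

lemma min_quotients_le:
  fixes q w A B :: real
  assumes "0 < A" "0 < B"
  shows "min (q / A) (w / B) * A \<le> q" and "min (q / A) (w / B) * B \<le> w"
  using assms by (auto simp: min_def field_simps)

lemma relay_rate_gap:
  fixes a b g \<alpha> P p q w :: real
  assumes pos: "0 < a" "0 < b" "0 < g" "1 \<le> \<alpha>"
    and budget: "0 \<le> p" "0 \<le> q" "0 \<le> w" "p + q \<le> P" "w \<le> g powr \<alpha> * P"
  defines "X \<equiv> ((a + b) / (1 + g)) powr \<alpha>"
  shows "relay_rate \<alpha> a b p q w
           \<le> P / X - p * (1 / ((1 + g) * X) - 1 / (a + b) powr \<alpha>)"
proof -
  define m where "m = min (q / a powr \<alpha>) (w / b powr \<alpha>)"
  define \<gamma> where "\<gamma> = g powr \<alpha>"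
  have X_pos: "0 < X" and \<gamma>_pos: "0 < \<gamma>"
    using pos by (simp_all add: X_def \<gamma>_def)
  have m_nonneg: "0 \<le> m"
    using budget by (simp add: m_def)
  have mA: "m * a powr \<alpha> \<le> P - p" and mB: "m * b powr \<alpha> \<le> \<gamma> * P"
    using min_quotients_le[of "a powr \<alpha>" "b powr \<alpha>" q w] pos budget
    by (simp_all add: m_def \<gamma>_def)
  have "m * ((1 + g) * X) \<le> m * (a powr \<alpha> + g / \<gamma> * b powr \<alpha>)"
    using hop_costs_lower_bound[OF pos] m_nonneg
    by (simp add: X_def \<gamma>_def mult_left_mono mult.commute)
  also have "\<dots> = m * a powr \<alpha> + g / \<gamma> * (m * b powr \<alpha>)"
    by (simp add: algebra_simps)
  also have "\<dots> \<le> (P - p) + g / \<gamma> * (\<gamma> * P)"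
    using mA mB pos \<gamma>_pos by (intro add_mono mult_left_mono) auto
  also have "\<dots> = (1 + g) * P - p"
    using \<gamma>_pos by (simp add: algebra_simps)
  finally have "m * ((1 + g) * X) \<le> (1 + g) * P - p" .
  then have "m \<le> ((1 + g) * P - p) / ((1 + g) * X)"
    using X_pos pos by (simp add: pos_le_divide_eq)
  also have "\<dots> = P / X - p / ((1 + g) * X)"
    using X_pos pos by (simp add: diff_divide_distrib)
  finally show ?thesis
    by (simp add: relay_rate_def m_def algebra_simps)
qed

text \<open>The direct hyperarc is less efficient than the relay path, strictly so when
  \<alpha> > 1: its cost D^\<alpha> = (1 + g)^\<alpha> x^\<alpha> dominates (1 + g) x^\<alpha>, where x = D/(1 + g).\<close>

lemma direct_hop_cost:
  fixes D g \<alpha> :: real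
  assumes "0 < D" "0 < g" "1 \<le> \<alpha>"
  shows "1 / D powr \<alpha> \<le> 1 / ((1 + g) * (D / (1 + g)) powr \<alpha>)"
    and "1 < \<alpha> \<Longrightarrow> 1 / D powr \<alpha> < 1 / ((1 + g) * (D / (1 + g)) powr \<alpha>)"
proof -
  define X where "X = (D / (1 + g)) powr \<alpha>"
  have X_pos: "0 < X"
    using assms by (simp add: X_def)
  have split: "D powr \<alpha> = (1 + g) powr \<alpha> * X"
    using assms by (simp add: X_def powr_mult[symmetric])
  have "1 + g \<le> (1 + g) powr \<alpha>"
    using powr_mono[of 1 \<alpha> "1 + g"] assms by simp
  then have "(1 + g) * X \<le> D powr \<alpha>"
    unfolding split using X_pos by simp
  then show "1 / D powr \<alpha> \<le> 1 / ((1 + g) * (D / (1 + g)) powr \<alpha>)"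
    using X_pos assms(2) by (intro divide_left_mono) (auto simp: X_def)
  assume "1 < \<alpha>"
  then have "(1 + g) powr 1 < (1 + g) powr \<alpha>"
    using assms by (subst powr_less_cancel_iff) auto
  then have "(1 + g) * X < D powr \<alpha>"
    unfolding split using X_pos assms(2) by simp
  then show "1 / D powr \<alpha> < 1 / ((1 + g) * (D / (1 + g)) powr \<alpha>)"
    using X_pos assms(2) by (intro divide_strict_left_mono) (auto simp: X_def)
qed

text \<open>Upper bound on the rate: the gap term of the main estimate is nonnegative.\<close>

lemma relay_rate_le:
  fixes a b g \<alpha> P p q w :: real
  assumes "0 < a" "0 < b" "0 < g" "1 \<le> \<alpha>"
    and "0 \<le> p" "0 \<le> q" "0 \<le> w" "p + q \<le> P" "w \<le> g powr \<alpha> * P"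
  shows "relay_rate \<alpha> a b p q w \<le> P / ((a + b) / (1 + g)) powr \<alpha>"
proof -
  have "0 \<le> p * (1 / ((1 + g) * ((a + b) / (1 + g)) powr \<alpha>) - 1 / (a + b) powr \<alpha>)"
    using direct_hop_cost(1)[of "a + b" g \<alpha>] assms by simp
  then show ?thesis
    using relay_rate_gap[OF assms] by linarith
qed

lemma powr_le_cancel_base:
  fixes x y \<alpha> :: real
  assumes "0 < \<alpha>" "0 \<le> x" "0 \<le> y" "x powr \<alpha> \<le> y powr \<alpha>"
  shows "x \<le> y"
proof (rule ccontr)
  assume "\<not> x \<le> y"
  then have "y powr \<alpha> < x powr \<alpha>"
    using assms(1,3) by (simp add: powr_less_mono2)
  with assms(4) show False
    by simp
qed

text \<open>Equality forces p = 0 and a = x: the two budget constraints give a \<le> x and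
  b \<le> g x, while a + b = (1 + g) x.\<close>

lemma relay_rate_eq_imp:
  fixes a b g \<alpha> P p q w :: real
  assumes pos: "0 < a" "0 < b" "0 < g" "1 < \<alpha>" "0 < P"
    and budget: "0 \<le> p" "0 \<le> q" "0 \<le> w" "p + q \<le> P" "w \<le> g powr \<alpha> * P"
    and eq: "relay_rate \<alpha> a b p q w = P / ((a + b) / (1 + g)) powr \<alpha>"
  shows "p = 0 \<and> a = (a + b) / (1 + g)"
proof -
  define x where "x = (a + b) / (1 + g)"
  define m where "m = min (q / a powr \<alpha>) (w / b powr \<alpha>)"
  have x_pos: "0 < x"
    using pos by (simp add: x_def)
  have "p * (1 / ((1 + g) * x powr \<alpha>) - 1 / (a + b) powr \<alpha>) \<le> 0"
    using relay_rate_gap[of a b g \<alpha> p q w P] pos budget eq by (simp add: x_def)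
  then have p0: "p = 0"
    using direct_hop_cost(2)[of "a + b" g \<alpha>] pos budget
    by (simp add: x_def mult_le_0_iff)
  then have m_eq: "m = P / x powr \<alpha>"
    using eq by (simp add: relay_rate_def m_def x_def)
  have "m * a powr \<alpha> \<le> P" and "m * b powr \<alpha> \<le> g powr \<alpha> * P"
    using min_quotients_le[of "a powr \<alpha>" "b powr \<alpha>" q w] pos budget p0
    by (simp_all add: m_def)
  then have "a powr \<alpha> \<le> x powr \<alpha>" and "b powr \<alpha> \<le> (g * x) powr \<alpha>"
    using pos x_pos by (simp_all add: m_eq field_simps powr_mult)
  then have a_le: "a \<le> x" and b_le: "b \<le> g * x"
    using powr_le_cancel_base[of \<alpha>] pos x_pos by simp_all
  have "(1 + g) * x = a + b"
    using pos(3) by (simp add: x_def)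
  then have "a + b = x + g * x"
    by (simp add: distrib_right)
  with a_le b_le have "a = x"
    by linarith
  with p0 show ?thesis
    unfolding x_def[symmetric] by simp
qed

lemma relay_rate_optimal_point:
  fixes x g \<alpha> P :: real
  assumes "0 < x" "0 < g"
  shows "relay_rate \<alpha> x (g * x) 0 P (g powr \<alpha> * P) = P / x powr \<alpha>"
  using assms by (simp add: relay_rate_def powr_mult field_simps)

section \<open>Geometry of the relay position\<close>

lemma dist_segment_point:
  fixes s t :: "'a::real_normed_vector"
  shows "dist s ((1 - u) *\<^sub>R s + u *\<^sub>R t) = \<bar>u\<bar> * dist s t"
    and "dist ((1 - u) *\<^sub>R s + u *\<^sub>R t) t = \<bar>1 - u\<bar> * dist s t"
proof -
  have "s - ((1 - u) *\<^sub>R s + u *\<^sub>R t) = u *\<^sub>R (s - t)"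
    by (simp add: algebra_simps)
  then show "dist s ((1 - u) *\<^sub>R s + u *\<^sub>R t) = \<bar>u\<bar> * dist s t"
    by (simp add: dist_norm)
  have "((1 - u) *\<^sub>R s + u *\<^sub>R t) - t = (1 - u) *\<^sub>R (s - t)"
    by (simp add: algebra_simps)
  then show "dist ((1 - u) *\<^sub>R s + u *\<^sub>R t) t = \<bar>1 - u\<bar> * dist s t"
    by (simp add: dist_norm)
qed

lemma open_segment_distances:
  fixes s t r :: "'a::real_normed_vector"
  assumes "r \<in> open_segment s t"
  defines "u \<equiv> dist s r / dist s t"
  shows "0 < dist s r" "0 < dist r t" "dist s r + dist r t = dist s t"
    and "r = (1 - u) *\<^sub>R s + u *\<^sub>R t"
proof -
  obtain v where v: "0 < v" "v < 1" "r = (1 - v) *\<^sub>R s + v *\<^sub>R t" and "s \<noteq> t"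
    using assms(1) unfolding in_segment by auto
  then have D_pos: "0 < dist s t"
    by simp
  have ds: "dist s r = v * dist s t" and dt: "dist r t = (1 - v) * dist s t"
    unfolding v(3) using dist_segment_point[where s = s and t = t and u = v] v(1,2) by simp_all
  show "0 < dist s r" "0 < dist r t" "dist s r + dist r t = dist s t"
    unfolding ds dt using v(1,2) D_pos by (simp_all add: algebra_simps)
  have "u = v"
    using ds D_pos by (simp add: u_def)
  with v show "r = (1 - u) *\<^sub>R s + u *\<^sub>R t"
    by simp
qed

lemma rate_st_relay_rate:
  assumes "r \<in> open_segment s t" "0 < N0"
  shows "rate_st \<alpha> N0 s r t Psr Psrt Prt
           = relay_rate \<alpha> (dist s r) (dist r t) Psrt Psr Prt / N0"
  using assms open_segment_distances(3)[OF assms(1)]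
  by (simp add: rate_st_def relay_rate_def add_divide_distrib min_divide_distrib_right
      divide_divide_eq_left)

lemma open_segment_point_at_distance:
  fixes s t :: "'a::real_normed_vector"
  assumes "0 < d" "d < dist s t"
  defines "u \<equiv> d / dist s t"
  shows "(1 - u) *\<^sub>R s + u *\<^sub>R t \<in> open_segment s t"
    and "dist s ((1 - u) *\<^sub>R s + u *\<^sub>R t) = d"
    and "dist ((1 - u) *\<^sub>R s + u *\<^sub>R t) t = dist s t - d"
proof -
  have D_pos: "0 < dist s t"
    using assms(1,2) by linarith
  then have u: "0 < u" "u < 1"
    using assms(1,2) by (simp_all add: u_def)
  then show "(1 - u) *\<^sub>R s + u *\<^sub>R t \<in> open_segment s t"
    using D_pos unfolding in_segment by auto
  show "dist s ((1 - u) *\<^sub>R s + u *\<^sub>R t) = d"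
    "dist ((1 - u) *\<^sub>R s + u *\<^sub>R t) t = dist s t - d"
    using dist_segment_point[where s = s and t = t and u = u] u assms(1) D_pos
    by (simp_all add: u_def algebra_simps)
qed

lemma rate_st_le_optimum:
  assumes r: "r \<in> open_segment s t" and pos: "0 < N0" "0 < g" "1 < \<alpha>" "0 < P"
    and feasible: "feasible_alloc P (g powr \<alpha> * P) Psr Psrt Prt"
  defines "x \<equiv> dist s t / (1 + g)"
  shows "rate_st \<alpha> N0 s r t Psr Psrt Prt \<le> P / x powr \<alpha> / N0"
    and "rate_st \<alpha> N0 s r t Psr Psrt Prt = P / x powr \<alpha> / N0 \<Longrightarrow> Psrt = 0 \<and> dist s r = x"
proof -
  note dists = open_segment_distances(1-3)[OF r]
  have budget: "0 \<le> Psrt" "0 \<le> Psr" "0 \<le> Prt" "Psrt + Psr \<le> P" "Prt \<le> g powr \<alpha> * P"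
    using feasible by (auto simp: feasible_alloc_def)
  have rate: "rate_st \<alpha> N0 s r t Psr Psrt Prt
                = relay_rate \<alpha> (dist s r) (dist r t) Psrt Psr Prt / N0"
    using rate_st_relay_rate[OF r pos(1)] .
  show "rate_st \<alpha> N0 s r t Psr Psrt Prt \<le> P / x powr \<alpha> / N0"
    unfolding rate x_def dists(3)[symmetric]
    using divide_right_mono[OF relay_rate_le[OF dists(1,2) pos(2) _ budget] less_imp_le[OF pos(1)]]
      pos(3) by simp
  assume "rate_st \<alpha> N0 s r t Psr Psrt Prt = P / x powr \<alpha> / N0"
  then have "relay_rate \<alpha> (dist s r) (dist r t) Psrt Psr Prt
               = P / ((dist s r + dist r t) / (1 + g)) powr \<alpha>"
    unfolding rate x_def dists(3)[symmetric] using pos(1) by (metis divide_cancel_right less_irrefl)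
  then show "Psrt = 0 \<and> dist s r = x"
    using relay_rate_eq_imp[OF dists(1,2) pos(2-4) budget] by (simp add: x_def dists(3))
qed

theorem lemma2:
  fixes s t :: "real^2" and Ps Pr N0 \<gamma> \<alpha> :: real
  assumes "dist s t > 0" and "Ps > 0" and "N0 > 0" and "\<gamma> > 0"
    and "Pr = \<gamma> * Ps" and "\<alpha> \<ge> 2"
  defines "Dsr \<equiv> dist s t / (1 + \<gamma> powr (1/\<alpha>))"
    and "Drt \<equiv> \<gamma> powr (1/\<alpha>) * dist s t / (1 + \<gamma> powr (1/\<alpha>))"
    and "Rstar \<equiv> Ps / ((dist s t / (1 + \<gamma> powr (1/\<alpha>))) powr \<alpha> * N0)"
  shows "Rstar = \<gamma> * Ps / (Drt powr \<alpha> * N0) \<and>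
    (\<exists>rs. rs \<in> open_segment s t \<and> dist s rs = Dsr \<and> dist rs t = Drt \<and>
       (\<forall>r \<in> open_segment s t. \<forall>Psr Psrt Prt. feasible_alloc Ps Pr Psr Psrt Prt \<longrightarrow>
           rate_st \<alpha> N0 s r t Psr Psrt Prt \<le> Rstar) \<and>
       (\<exists>Psr Psrt Prt. feasible_alloc Ps Pr Psr Psrt Prt \<and>
           rate_st \<alpha> N0 s rs t Psr Psrt Prt = Rstar) \<and>
       (\<forall>r \<in> open_segment s t. \<forall>Psr Psrt Prt. feasible_alloc Ps Pr Psr Psrt Prt \<longrightarrow>
           rate_st \<alpha> N0 s r t Psr Psrt Prt = Rstar \<longrightarrow> r = rs \<and> Psrt = 0))"
proof -
  define g where "g = \<gamma> powr (1/\<alpha>)"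
  define x where "x = dist s t / (1 + g)"
  define rs where "rs = (1 - x / dist s t) *\<^sub>R s + (x / dist s t) *\<^sub>R t"
  have \<alpha>: "1 < \<alpha>" and "\<alpha> \<noteq> 0"
    using assms(6) by simp_all
  then have g: "0 < g" "g powr \<alpha> = \<gamma>"
    using assms(4) by (simp_all add: g_def powr_powr)
  have x: "0 < x" "x < dist s t" "dist s t - x = g * x"
    using assms(1) g(1) by (simp_all add: x_def field_simps)
  have Pr: "Pr = g powr \<alpha> * Ps"
    by (simp add: assms(5) g(2))
  have Rstar: "Rstar = Ps / x powr \<alpha> / N0" and Dsr: "Dsr = x" and Drt: "Drt = g * x"
    by (simp_all add: Rstar_def Dsr_def Drt_def x_def g_def)
  note rs = open_segment_point_at_distance[OF x(1,2), folded rs_def, unfolded x(3)]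
  have optimum_value: "Rstar = \<gamma> * Ps / (Drt powr \<alpha> * N0)"
    using g x(1) assms(4) by (simp add: Rstar Drt powr_mult)
  have attained: "feasible_alloc Ps Pr Ps 0 Pr \<and> rate_st \<alpha> N0 s rs t Ps 0 Pr = Rstar"
    using rate_st_relay_rate[OF rs(1) assms(3)] relay_rate_optimal_point[OF x(1) g(1), of \<alpha> Ps, unfolded g(2)]
      assms(2,4) by (simp add: feasible_alloc_def rs Pr g(2) Rstar)
  have bounded: "rate_st \<alpha> N0 s r t Psr Psrt Prt \<le> Rstar"
    if "r \<in> open_segment s t" "feasible_alloc Ps Pr Psr Psrt Prt" for r Psr Psrt Prt
    using rate_st_le_optimum(1)[OF that(1) assms(3) g(1) \<alpha> assms(2)] that(2)
    unfolding Pr Rstar x_def .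
  have optimal_unique: "r = rs \<and> Psrt = 0"
    if "r \<in> open_segment s t" "feasible_alloc Ps Pr Psr Psrt Prt"
      and "rate_st \<alpha> N0 s r t Psr Psrt Prt = Rstar" for r Psr Psrt Prt
  proof -
    have "Psrt = 0 \<and> dist s r = x"
      using rate_st_le_optimum(2)[OF that(1) assms(3) g(1) \<alpha> assms(2)] that(2,3)
      unfolding Pr Rstar x_def by blast
    then show ?thesis
      using open_segment_distances(4)[OF that(1)] by (simp add: rs_def)
  qed
  show ?thesis
    using optimum_value rs(1-3) attained bounded optimal_unique unfolding Dsr Drt by blast
qed

end
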